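(* Let $L\ge1$ and $\Gamma^0\in\{0,1\}^L$ (coordinates indexed by $\mathbb{Z}/L\mathbb{Z}$, viewed as a cycle). Color the positions so that each maximal cyclic interval (run) of equal values in $\Gamma^0$ receives its own distinct color, and run the following colored copying process $\tilde\Gamma^i$: given $\tilde\Gamma^i$, choose a permutation $\sigma$ of $\{0,\dots,L-1\}$ uniformly at random (independently of the past), set $\Delta_0=\tilde\Gamma^i$, and for $1\le j\le L$ let $\Delta_j$ be obtained from $\Delta_{j-1}$ by giving position $\sigma(j-1)$ the current color of position $(\sigma(j-1)+1)\bmod L$ (all other positions unchanged); set $\tilde\Gamma^{i+1}=\Delta_L$. Fix one interval (color) and let $X_i$ be its length, i.e. the number of positions having that color in $\tilde\Gamma^i$. Let $T$ be the first time at which $X_i$ equals $0$ or $L$. Then for every integer $a\ge1$, $\Pr[T\ge 4aL^2]\le 2^{-a}$. *)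

theory Defs
  imports "HOL-Probability.Probability" "HOL-Combinatorics.Permutations"
begin

text \<open>Positions are 0..L-1, viewed cyclically. A colouring is a function nat => nat
  (only the values at positions below L matter).\<close>

text \<open>p and q (both below L) lie in the same maximal cyclic run of equal values of G:
  the forward cyclic interval from p to q, or the one from q to p, is constant.\<close>
definition same_run :: "nat \<Rightarrow> (nat \<Rightarrow> bool) \<Rightarrow> nat \<Rightarrow> nat \<Rightarrow> bool" where
  "same_run L G p q \<longleftrightarrow>
     (\<exists>k<L. (p + k) mod L = q \<and> (\<forall>j\<le>k. G ((p + j) mod L) = G p)) \<or>
     (\<exists>k<L. (q + k) mod L = p \<and> (\<forall>j\<le>k. G ((q + j) mod L) = G q))"

definition run_colouring :: "nat \<Rightarrow> (nat \<Rightarrow> bool) \<Rightarrow> (nat \<Rightarrow> nat) \<Rightarrow> bool" where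
  "run_colouring L G c \<longleftrightarrow> (\<forall>p<L. \<forall>q<L. c p = c q \<longleftrightarrow> same_run L G p q)"

definition copy_sweep :: "nat \<Rightarrow> (nat \<Rightarrow> nat) \<Rightarrow> (nat \<Rightarrow> nat) \<Rightarrow> (nat \<Rightarrow> nat)" where
  "copy_sweep L \<sigma> c = foldl (\<lambda>d j. d(\<sigma> j := d ((\<sigma> j + 1) mod L))) c [0..<L]"

definition copy_step :: "nat \<Rightarrow> (nat \<Rightarrow> nat) \<Rightarrow> (nat \<Rightarrow> nat) pmf" where
  "copy_step L c = map_pmf (\<lambda>\<sigma>. copy_sweep L \<sigma> c) (pmf_of_set {\<sigma>. \<sigma> permutes {..<L}})"

text \<open>Distribution of the trajectory [state_0, ..., state_n] (a list of length n+1).\<close>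
fun copy_traj :: "nat \<Rightarrow> (nat \<Rightarrow> nat) \<Rightarrow> nat \<Rightarrow> (nat \<Rightarrow> nat) list pmf" where
  "copy_traj L c0 0 = return_pmf [c0]"
| "copy_traj L c0 (Suc n) =
     bind_pmf (copy_traj L c0 n) (\<lambda>xs. map_pmf (\<lambda>d. xs @ [d]) (copy_step L (last xs)))"

definition colour_len :: "nat \<Rightarrow> nat \<Rightarrow> (nat \<Rightarrow> nat) \<Rightarrow> nat" where
  "colour_len L k c = card {p. p < L \<and> c p = k}"

end

theory Submission
  imports Defs
begin

text \<open>
  After a sweep every position p carries the original colour of a source position, found by
  following the chain of copies to the right; the sources are arranged cyclically monotonically,
  so every colour class stays a cyclic interval. Rotating the circle does not change the law of
  the sweep, hence the expected length of a colour after a sweep equals its length before: the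
  length X is a martingale. If 0 < X < L, the length changes with probability at least 1/4,
  which is decided by the relative update order of at most two disjoint pairs of neighbours. So
  the potential X (L - X) drops by at least 1/4 in expectation while the colour is alive, the
  expected absorption time is at most 4 X0 (L - X0) \<le> L^2, and by Markov's inequality
  the colour survives 4 L^2 steps with probability at most 1/4. The Markov property of the
  process iterates this bound a times.
\<close>

lemma measure_pmf_prob_bind_pmf:
  "measure_pmf.prob (bind_pmf M f) A = measure_pmf.expectation M (\<lambda>x. measure_pmf.prob (f x) A)"
proof -
  have "ennreal (measure_pmf.prob (bind_pmf M f) A) = emeasure (measure_pmf (bind_pmf M f)) A"
    by (simp add: measure_pmf.emeasure_eq_measure)
  also have "\<dots> = (\<integral>\<^sup>+x. emeasure (f x) A \<partial>M)" by simp
  also have "\<dots> = (\<integral>\<^sup>+x. ennreal (measure_pmf.prob (f x) A) \<partial>M)"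
    by (simp add: measure_pmf.emeasure_eq_measure)
  also have "\<dots> = ennreal (measure_pmf.expectation M (\<lambda>x. measure_pmf.prob (f x) A))"
    by (intro nn_integral_eq_integral measure_pmf.integrable_const_bound[where B=1]) auto
  finally show ?thesis by (simp add: ennreal_inj measure_nonneg integral_nonneg_AE)
qed

lemma copy_traj_nonempty: "xs \<in> set_pmf (copy_traj L c n) \<Longrightarrow> xs \<noteq> []"
  by (induction n arbitrary: xs) auto

lemma copy_traj_Suc_Cons:
  "copy_traj L c0 (Suc n) =
     bind_pmf (copy_step L c0) (\<lambda>c1. map_pmf (\<lambda>xs. c0 # xs) (copy_traj L c1 n))"
proof (induction n)
  case 0
  then show ?case by (simp add: bind_return_pmf map_pmf_def)
next
  case (Suc n)
  have "copy_traj L c0 (Suc (Suc n)) =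
     bind_pmf (copy_traj L c0 (Suc n)) (\<lambda>xs. map_pmf (\<lambda>d. xs @ [d]) (copy_step L (last xs)))"
    by simp
  also have "\<dots> = bind_pmf (copy_step L c0) (\<lambda>c1. bind_pmf (copy_traj L c1 n)
        (\<lambda>ys. map_pmf (\<lambda>d. (c0 # ys) @ [d]) (copy_step L (last (c0 # ys)))))"
    by (subst Suc) (simp only: bind_assoc_pmf bind_map_pmf last.simps list.simps append_Cons
        map_pmf_def bind_return_pmf)
  also have "\<dots> = bind_pmf (copy_step L c0) (\<lambda>c1. bind_pmf (copy_traj L c1 n)
        (\<lambda>ys. map_pmf (\<lambda>d. c0 # (ys @ [d])) (copy_step L (last ys))))"
    by (intro bind_pmf_cong refl) (auto dest: copy_traj_nonempty)
  also have "\<dots> = bind_pmf (copy_step L c0) (\<lambda>c1. map_pmf (\<lambda>xs. c0 # xs) (copy_traj L c1 (Suc n)))"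
    by (simp add: map_bind_pmf map_pmf_comp o_def)
  finally show ?case .
qed

definition perms :: "nat \<Rightarrow> (nat \<Rightarrow> nat) set" where
  "perms L = {\<sigma>. \<sigma> permutes {..<L}}"

lemma finite_perms: "finite (perms L)"
  and perms_nonempty: "perms L \<noteq> {}"
  and card_perms: "card (perms L) = fact L"
  unfolding perms_def by (auto intro: finite_permutations card_permutations permutes_id)

lemma expectation_copy_step:
  fixes f :: "(nat \<Rightarrow> nat) \<Rightarrow> real"
  shows "measure_pmf.expectation (copy_step L c) f = (\<Sum>\<sigma>\<in>perms L. f (copy_sweep L \<sigma> c)) / fact L"
  using integral_pmf_of_set[OF perms_nonempty[of L] finite_perms, where f="\<lambda>\<sigma>. f (copy_sweep L \<sigma> c)"]
  by (simp add: copy_step_def card_perms flip: perms_def)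

definition survival_prob :: "nat \<Rightarrow> nat \<Rightarrow> nat \<Rightarrow> (nat \<Rightarrow> nat) \<Rightarrow> real" where
  "survival_prob L k n c =
     measure_pmf.prob (copy_traj L c n) {xs. \<forall>i<n. colour_len L k (xs ! i) \<notin> {0, L}}"

lemma survival_prob_0 [simp]: "survival_prob L k 0 c = 1"
  by (simp add: survival_prob_def)

lemma survival_prob_le_1: "survival_prob L k n c \<le> 1"
  by (simp add: survival_prob_def)

lemma survival_prob_Suc:
  "survival_prob L k (Suc n) c = (if colour_len L k c \<in> {0, L} then 0
      else (\<Sum>\<sigma>\<in>perms L. survival_prob L k n (copy_sweep L \<sigma> c)) / fact L)"
proof -
  let ?E = "\<lambda>n. {xs. \<forall>i<n. colour_len L k (xs ! i) \<notin> {0, L}}"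
  have "(\<lambda>xs. c # xs) -` ?E (Suc n) = (if colour_len L k c \<in> {0, L} then {} else ?E n)"
    by (auto simp: less_Suc_eq_0_disj)
  then show ?thesis
    unfolding survival_prob_def copy_traj_Suc_Cons measure_pmf_prob_bind_pmf
    by (simp add: expectation_copy_step)
qed

lemma survival_prob_Suc_le: "survival_prob L k (Suc n) c \<le> survival_prob L k n c"
proof (induction n arbitrary: c)
  case 0
  then show ?case using survival_prob_le_1 by simp
next
  case (Suc n)
  then have "(\<Sum>\<sigma>\<in>perms L. survival_prob L k (Suc n) (copy_sweep L \<sigma> c))
      \<le> (\<Sum>\<sigma>\<in>perms L. survival_prob L k n (copy_sweep L \<sigma> c))"
    by (intro sum_mono)
  then show ?case by (subst (1 2) survival_prob_Suc) (simp add: divide_right_mono)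
qed

lemma survival_prob_antimono: "m \<le> n \<Longrightarrow> survival_prob L k n c \<le> survival_prob L k m c"
  by (induction n rule: dec_induct) (auto intro: order_trans[OF survival_prob_Suc_le])

definition copy_update :: "nat \<Rightarrow> (nat \<Rightarrow> nat) \<Rightarrow> (nat \<Rightarrow> nat) \<Rightarrow> nat \<Rightarrow> nat \<Rightarrow> nat" where
  "copy_update L \<sigma> d j = d(\<sigma> j := d ((\<sigma> j + 1) mod L))"

lemma copy_sweep_foldl: "copy_sweep L \<sigma> c = foldl (copy_update L \<sigma>) c [0..<L]"
  unfolding copy_sweep_def copy_update_def ..

lemma foldl_copy_update_comp:
  "foldl (copy_update L \<sigma>) (c \<circ> d) xs = c \<circ> foldl (copy_update L \<sigma>) d xs"
proof (induction xs arbitrary: d)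
  case (Cons x xs)
  have "copy_update L \<sigma> (c \<circ> d) x = c \<circ> copy_update L \<sigma> d x"
    by (simp add: copy_update_def fun_eq_iff)
  then show ?case by (simp only: foldl_Cons Cons.IH)
qed simp

definition sweep_source :: "nat \<Rightarrow> (nat \<Rightarrow> nat) \<Rightarrow> nat \<Rightarrow> nat" where
  "sweep_source L \<sigma> = copy_sweep L \<sigma> id"

lemma copy_sweep_eq_source: "copy_sweep L \<sigma> c p = c (sweep_source L \<sigma> p)"
  using foldl_copy_update_comp[of L \<sigma> c id "[0..<L]"]
  unfolding sweep_source_def copy_sweep_foldl by simp

lemma foldl_copy_update_less:
  assumes "\<forall>q<L. d q < L" "p < L"
  shows "foldl (copy_update L \<sigma>) d xs p < L"
  using assms by (induction xs arbitrary: d) (auto simp: copy_update_def)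

lemma sweep_source_less: "p < L \<Longrightarrow> sweep_source L \<sigma> p < L"
  unfolding sweep_source_def copy_sweep_foldl by (rule foldl_copy_update_less) auto

section \<open>Rotation invariance\<close>

definition rot :: "nat \<Rightarrow> nat \<Rightarrow> nat \<Rightarrow> nat" where
  "rot L m p = (p + m) mod L"

text \<open>For m \<le> L, the inverse of rot L m on {..<L}, extended by the identity so that it permutes
  {..<L}.\<close>
definition rot_inv :: "nat \<Rightarrow> nat \<Rightarrow> nat \<Rightarrow> nat" where
  "rot_inv L m q = (if q < L then (q + L - m) mod L else q)"

lemma rot_less: "0 < L \<Longrightarrow> rot L m p < L"
  by (simp add: rot_def)

lemma rot_inv_less: "q < L \<Longrightarrow> rot_inv L m q < L"
  by (simp add: rot_inv_def)

lemma rot_rot_inv: "m \<le> L \<Longrightarrow> q < L \<Longrightarrow> rot L m (rot_inv L m q) = q"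
  unfolding rot_def rot_inv_def by (simp add: mod_add_left_eq)

lemma rot_inv_rot:
  assumes "m \<le> L" "p < L"
  shows "rot_inv L m (rot L m p) = p"
proof -
  have "((p + m) mod L + L - m) mod L = ((p + m) mod L + (L - m)) mod L"
    using assms(1) by simp
  also have "\<dots> = (p + m + (L - m)) mod L"
    by (rule mod_add_left_eq)
  also have "p + m + (L - m) = p + L"
    using assms(1) by simp
  finally show ?thesis using assms(2) by (simp add: rot_def rot_inv_def)
qed

lemma rot_mod: "rot L (m mod L) = rot L m"
  by (simp add: rot_def fun_eq_iff mod_add_right_eq)

lemma rot_Suc_mod: "rot L m ((p + 1) mod L) = (rot L m p + 1) mod L"
  unfolding rot_def by (metis add.commute add.left_commute mod_add_left_eq)

lemma inj_on_rot: "inj_on (rot L m) {..<L}"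
proof (rule inj_onI)
  fix x y assume "x \<in> {..<L}" "y \<in> {..<L}" "rot L m x = rot L m y"
  moreover from this have "m mod L \<le> L" by simp
  ultimately show "x = y"
    using rot_inv_rot[of "m mod L" L] by (metis lessThan_iff rot_mod)
qed

lemma rot_inv_permutes: "m \<le> L \<Longrightarrow> rot_inv L m permutes {..<L}"
  by (rule bij_imp_permutes, rule bij_betw_byWitness[where f' = "rot L m"])
    (auto simp: rot_inv_rot rot_rot_inv rot_inv_less rot_less, simp add: rot_inv_def)

lemma sum_rot: "(\<Sum>p<L. f (rot L m p)) = (\<Sum>p<L. (f p :: 'a::comm_monoid_add))"
proof (cases "L = 0")
  case False
  have "m mod L \<le> L" using False by simp
  then show ?thesis
    by (subst rot_mod[symmetric], intro sum.reindex_bij_witness[where i = "rot_inv L (m mod L)"])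
      (use False in \<open>auto simp: rot_inv_rot rot_rot_inv rot_inv_less rot_less\<close>)
qed simp

lemma card_rot_image: "K \<subseteq> {..<L} \<Longrightarrow> card (rot L m ` K) = card K"
  by (rule card_image, rule inj_on_subset[OF inj_on_rot])

lemma foldl_copy_update_rot:
  assumes \<sigma>: "\<sigma> permutes {..<L}" and m: "m < L" and "n \<le> L" "p < L"
  shows "foldl (copy_update L (rot_inv L m \<circ> \<sigma>)) (c \<circ> rot L m) [0..<n] p
       = foldl (copy_update L \<sigma>) c [0..<n] (rot L m p)"
  using assms(3,4)
proof (induction n arbitrary: p)
  case (Suc n)
  define q where "q = \<sigma> n"
  have "q < L" using permutes_in_image[OF \<sigma>, of n] Suc.prems unfolding q_def by auto
  then have q: "rot_inv L m q < L" "rot L m (rot_inv L m q) = q"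
    using m by (auto simp: rot_inv_less rot_rot_inv)
  have "p = rot_inv L m q \<longleftrightarrow> rot L m p = q"
    using q Suc.prems inj_on_rot[of L m] by (auto simp: inj_on_def)
  with q show ?case
    using Suc rot_Suc_mod[of L m "rot_inv L m q"] by (auto simp: copy_update_def q_def)
qed simp

lemma copy_sweep_rot:
  assumes "\<sigma> permutes {..<L}" "m < L" "p < L"
  shows "copy_sweep L (rot_inv L m \<circ> \<sigma>) (c \<circ> rot L m) p = copy_sweep L \<sigma> c (rot L m p)"
  using foldl_copy_update_rot[OF assms(1,2) order_refl assms(3)] by (simp add: copy_sweep_foldl)

lemma rot_inv_comp_perms: "\<sigma> \<in> perms L \<Longrightarrow> m \<le> L \<Longrightarrow> rot_inv L m \<circ> \<sigma> \<in> perms L"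
  unfolding perms_def using rot_inv_permutes by (simp add: permutes_compose)

lemma sum_perms_comp:
  assumes "\<rho> permutes {..<L}"
  shows "(\<Sum>\<sigma>\<in>perms L. g (\<rho> \<circ> \<sigma>)) = (\<Sum>\<sigma>\<in>perms L. (g \<sigma> :: 'a::comm_monoid_add))"
proof (rule sum.reindex_bij_witness[where j = "\<lambda>\<sigma>. \<rho> \<circ> \<sigma>" and i = "\<lambda>\<tau>. inv \<rho> \<circ> \<tau>"])
  show "inv \<rho> \<circ> (\<rho> \<circ> a) = a" "\<rho> \<circ> (inv \<rho> \<circ> a) = a" for a
    using permutes_inv_o[OF assms] by (simp_all add: o_assoc)
  show "\<rho> \<circ> a \<in> perms L" "inv \<rho> \<circ> a \<in> perms L" if "a \<in> perms L" for a
    using that assms permutes_inv[OF assms] by (simp_all add: perms_def permutes_compose)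
qed simp

section \<open>The length of a colour is a martingale\<close>

definition colour_set :: "nat \<Rightarrow> nat \<Rightarrow> (nat \<Rightarrow> nat) \<Rightarrow> nat set" where
  "colour_set L k c = {p. p < L \<and> c p = k}"

lemma colour_len_eq_card: "colour_len L k c = card (colour_set L k c)"
  by (simp add: colour_len_def colour_set_def)

lemma colour_set_subset: "colour_set L k c \<subseteq> {..<L}"
  by (auto simp: colour_set_def)

lemma colour_len_le: "colour_len L k c \<le> L"
  unfolding colour_len_eq_card using card_mono[OF finite_lessThan colour_set_subset] by simp

lemma card_less_eq_sum: "card {p. p < (L::nat) \<and> Q p} = (\<Sum>p<L. of_bool (Q p) :: nat)"
  by (simp add: lessThan_def Int_def)

lemma sweep_source_rot:
  assumes "\<sigma> permutes {..<L}" "p < L"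
  shows "sweep_source L \<sigma> p = rot L p (sweep_source L (rot_inv L p \<circ> \<sigma>) 0)"
  using copy_sweep_rot[OF assms(1,2), of 0 id] assms(2)
  by (simp add: copy_sweep_eq_source rot_def)

text \<open>Position p receives, shifted by p, what position 0 receives under the rotated permutation;
  reindexing over the permutations, each shift p then counts the positions of colour k once.\<close>
lemma sum_colour_len_copy_sweep:
  "(\<Sum>\<sigma>\<in>perms L. colour_len L k (copy_sweep L \<sigma> c)) = fact L * colour_len L k c"
proof -
  let ?hits = "\<lambda>\<sigma> p. of_bool (c (rot L p (sweep_source L \<sigma> 0)) = k) :: nat"
  have "(\<Sum>\<sigma>\<in>perms L. colour_len L k (copy_sweep L \<sigma> c))
      = (\<Sum>p<L. \<Sum>\<sigma>\<in>perms L. of_bool (c (sweep_source L \<sigma> p) = k))"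
    unfolding colour_len_def card_less_eq_sum copy_sweep_eq_source by (rule sum.swap)
  also have "\<dots> = (\<Sum>p<L. \<Sum>\<sigma>\<in>perms L. ?hits (rot_inv L p \<circ> \<sigma>) p)"
    by (intro sum.cong refl) (simp add: perms_def sweep_source_rot)
  also have "\<dots> = (\<Sum>p<L. \<Sum>\<sigma>\<in>perms L. ?hits \<sigma> p)"
    by (intro sum.cong refl sum_perms_comp[where g = "\<lambda>\<sigma>. ?hits \<sigma> _"] rot_inv_permutes) simp
  also have "\<dots> = (\<Sum>\<sigma>\<in>perms L. \<Sum>p<L. of_bool (c (rot L (sweep_source L \<sigma> 0) p) = k))"
    by (subst sum.swap) (simp add: rot_def add.commute)
  also have "\<dots> = (\<Sum>\<sigma>\<in>perms L. colour_len L k c)"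
    by (simp add: sum_rot[where f = "\<lambda>q. of_bool (c q = k)"] colour_len_def card_less_eq_sum)
  finally show ?thesis by (simp add: card_perms)
qed

section \<open>Cyclic intervals\<close>

definition cyc_interval :: "nat \<Rightarrow> nat set \<Rightarrow> bool" where
  "cyc_interval L K \<longleftrightarrow> (\<exists>s n. n \<le> L \<and> K = (\<lambda>i. (s + i) mod L) ` {..<n})"

lemma cyc_interval_empty: "cyc_interval L {}"
  unfolding cyc_interval_def by (intro exI[of _ 0]) auto

lemma cyc_interval_full: "cyc_interval L {..<L}"
  unfolding cyc_interval_def by (intro exI[of _ 0] exI[of _ L]) auto

lemma card_cyc_interval: "n \<le> L \<Longrightarrow> card ((\<lambda>i. (s + i) mod L) ` {..<n}) = n"
  using card_image[OF inj_on_subset[OF inj_on_rot[of L s]], of "{..<n}"]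
  by (simp add: rot_def add.commute)

lemma cyc_interval_rot_image:
  assumes "cyc_interval L K"
  shows "cyc_interval L (rot L m ` K)"
proof -
  obtain s n where "n \<le> L" "K = (\<lambda>i. (s + i) mod L) ` {..<n}"
    using assms by (auto simp: cyc_interval_def)
  moreover have "rot L m ((s + i) mod L) = (s + m + i) mod L" for i
    unfolding rot_def by (metis add.commute add.left_commute mod_add_left_eq)
  ultimately show ?thesis
    unfolding cyc_interval_def by (intro exI[of _ "s + m"] exI[of _ n]) (simp add: image_image)
qed

lemma cyc_interval_rot_preimage:
  assumes "K \<subseteq> {..<L}" "m < L" "cyc_interval L {p. p < L \<and> rot L m p \<in> K}"
  shows "cyc_interval L K"
proof -
  have "K = rot L m ` {p. p < L \<and> rot L m p \<in> K}"
  proof (intro set_eqI iffI)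
    fix q assume "q \<in> K"
    then have "rot_inv L m q \<in> {p. p < L \<and> rot L m p \<in> K}" "rot L m (rot_inv L m q) = q"
      using assms(1,2) by (auto simp: rot_rot_inv rot_inv_less)
    then show "q \<in> rot L m ` {p. p < L \<and> rot L m p \<in> K}" by (metis image_eqI)
  qed auto
  with cyc_interval_rot_image[OF assms(3), of m] show ?thesis by simp
qed

lemma atLeastAtMost_cyc_interval: "b < L \<Longrightarrow> cyc_interval L {a..b}"
  unfolding cyc_interval_def
proof (intro exI conjI)
  assume "b < L"
  show "{a..b} = (\<lambda>i. (a + i) mod L) ` {..<Suc b - a}"
  proof (intro set_eqI iffI)
    fix x assume "x \<in> {a..b}"
    then have "x = (a + (x - a)) mod L" "x - a < Suc b - a" using \<open>b < L\<close> by auto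
    then show "x \<in> (\<lambda>i. (a + i) mod L) ` {..<Suc b - a}" by blast
  next
    fix x assume "x \<in> (\<lambda>i. (a + i) mod L) ` {..<Suc b - a}"
    then obtain i where "i < Suc b - a" "x = (a + i) mod L" by blast
    then show "x \<in> {a..b}" using \<open>b < L\<close> by auto
  qed
qed simp

lemma eq_atLeastAtMost_if_unique_exit:
  fixes K :: "nat set"
  assumes fin: "finite K" and ne: "K \<noteq> {}"
    and exit: "\<And>p. p \<in> K \<Longrightarrow> p + 1 \<notin> K \<Longrightarrow> p = Max K"
  shows "K = {Min K..Max K}"
proof (intro equalityI subsetI)
  fix x assume x: "x \<in> {Min K..Max K}"
  show "x \<in> K"
  proof (rule ccontr)
    assume "x \<notin> K"
    define y where "y = Max {z \<in> K. z < x}"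
    have "Min K \<in> {z \<in> K. z < x}"
      using Min_in[OF fin ne] x \<open>x \<notin> K\<close> by (auto simp: le_less)
    then have "y \<in> {z \<in> K. z < x}"
      unfolding y_def by (intro Max_in) (use fin in auto)
    then have y: "y \<in> K" "y < x" "\<And>z. z \<in> K \<Longrightarrow> z < x \<Longrightarrow> z \<le> y"
      using fin by (auto simp: y_def)
    have "y + 1 \<notin> K"
    proof
      assume "y + 1 \<in> K"
      moreover have "y + 1 \<noteq> x" using calculation \<open>x \<notin> K\<close> by auto
      ultimately have "y + 1 \<le> y" using y by auto
      then show False by simp
    qed
    then have "y = Max K" using exit y(1) by blast
    then show False using x y(2) by simp
  qed
qed (use fin in auto)

lemma cyc_interval_if_unique_exit:
  assumes sub: "K \<subseteq> {..<L}"
    and unique: "\<And>p q. p \<in> K \<Longrightarrow> (p + 1) mod L \<notin> K \<Longrightarrow> q \<in> K \<Longrightarrow> (q + 1) mod L \<notin> K \<Longrightarrow> p = q"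
  shows "cyc_interval L K"
proof (cases "K = {..<L}")
  case False
  then obtain r where r: "r < L" "r \<notin> K" using sub by auto
  define m where "m = (r + 1) mod L"
  have mL: "m < L" using r by (simp add: m_def)
  define K' where "K' = {p. p < L \<and> rot L m p \<in> K}"
  have "rot L m (L - 1) = (L - 1 + (r + 1)) mod L"
    unfolding rot_def m_def by (rule mod_add_right_eq)
  then have top: "rot L m (L - 1) = r"
    using r by simp
  have "cyc_interval L K'"
  proof (cases "K' = {}")
    case False
    have fin: "finite K'" by (simp add: K'_def)
    have K'L: "K' \<subseteq> {..<L - 1}"
    proof
      fix x assume "x \<in> K'"
      then have "x < L" "x \<noteq> L - 1" using top r by (auto simp: K'_def)
      then show "x \<in> {..<L - 1}" by simp
    qed
    have exit: "p = Max K'" if p: "p \<in> K'" "p + 1 \<notin> K'" for p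
    proof -
      have M: "Max K' \<in> K'" "Max K' + 1 \<notin> K'"
        using False fin Max_ge[OF fin, of "Max K' + 1"] by (auto simp del: Max_ge)
      have step: "x + 1 < L \<Longrightarrow> (rot L m x + 1) mod L = rot L m (x + 1)" for x
        using rot_Suc_mod[of L m x] by simp
      have not_in: "(rot L m x + 1) mod L \<notin> K" if "x \<in> K'" "x + 1 \<notin> K'" for x
      proof -
        have "x + 1 < L" using that(1) K'L by auto
        then show ?thesis using that(2) step[of x] by (simp add: K'_def)
      qed
      have "rot L m p = rot L m (Max K')"
        using unique[of "rot L m p" "rot L m (Max K')"] not_in p M by (simp add: K'_def)
      then show "p = Max K'"
        by (rule inj_onD[OF inj_on_rot]) (use p(1) M(1) in \<open>simp_all add: K'_def\<close>)
    qed
    have "K' = {Min K'..Max K'}"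
      using fin False exit by (rule eq_atLeastAtMost_if_unique_exit)
    moreover have "Max K' < L" using K'L Max_in[OF fin False] by auto
    ultimately show ?thesis using atLeastAtMost_cyc_interval by metis
  qed (simp add: cyc_interval_empty)
  then show ?thesis unfolding K'_def by (rule cyc_interval_rot_preimage[OF sub mL])
qed (simp add: cyc_interval_full)

lemma wrapped_interval_eq:
  assumes "a < b" "b < L"
  shows "{p. p < L \<and> (p \<le> a \<or> b < p)} = (\<lambda>i. (Suc b + i) mod L) ` {..<L - b + a}"
proof (intro set_eqI iffI)
  fix p assume "p \<in> {p. p < L \<and> (p \<le> a \<or> b < p)}"
  then have p: "p < L" "p \<le> a \<or> b < p" by auto
  show "p \<in> (\<lambda>i. (Suc b + i) mod L) ` {..<L - b + a}"
  proof (cases "p \<le> a")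
    case True
    have "(Suc b + (L - Suc b + p)) mod L = p" "L - Suc b + p < L - b + a"
      using assms p True by simp_all
    then show ?thesis by (metis image_eqI lessThan_iff)
  next
    case False
    then have "(Suc b + (p - Suc b)) mod L = p" "p - Suc b < L - b + a"
      using assms p by auto
    then show ?thesis by (metis image_eqI lessThan_iff)
  qed
next
  fix p assume "p \<in> (\<lambda>i. (Suc b + i) mod L) ` {..<L - b + a}"
  then obtain i where i: "i < L - b + a" "p = (Suc b + i) mod L" by auto
  show "p \<in> {p. p < L \<and> (p \<le> a \<or> b < p)}"
  proof (cases "Suc b + i < L")
    case False
    then have "p = Suc b + i - L" using i assms by (simp add: mod_if le_mod_geq)
    then show ?thesis using i(1) assms False by auto
  qed (use i assms in simp)
qed

section \<open>The sources of a sweep\<close>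

definition ascent :: "nat \<Rightarrow> (nat \<Rightarrow> nat) \<Rightarrow> nat \<Rightarrow> bool" where
  "ascent L \<sigma> p \<longleftrightarrow> inv \<sigma> p < inv \<sigma> ((p + 1) mod L)"

text \<open>A sufficient condition, in terms of at most two disjoint pairs of update times, for a colour
  occupying exactly the positions 1..X to change its length in a sweep.\<close>
definition resize_event :: "nat \<Rightarrow> nat \<Rightarrow> (nat \<Rightarrow> nat) \<Rightarrow> bool" where
  "resize_event L X \<sigma> \<longleftrightarrow>
     (if X = 1 then \<not> ascent L \<sigma> 0
      else if X = L - 1 then \<not> ascent L \<sigma> (L - 1)
      else \<not> ascent L \<sigma> (L - 1) \<and> ascent L \<sigma> (X - 1))"

locale sweep =
  fixes L :: nat and \<sigma> :: "nat \<Rightarrow> nat"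
  assumes two_le_L: "2 \<le> L" and perm: "\<sigma> permutes {..<L}"
begin

abbreviation nxt :: "nat \<Rightarrow> nat" where
  "nxt p \<equiv> (p + 1) mod L"

lemma inv_less: "p < L \<Longrightarrow> inv \<sigma> p < L"
  using permutes_in_image[OF permutes_inv[OF perm]] by simp

lemma inv_apply: "inv \<sigma> (\<sigma> j) = j"
  using permutes_inverses(2)[OF perm] .

lemma inv_eq_iff: "inv \<sigma> p = inv \<sigma> q \<longleftrightarrow> p = q"
  by (metis permutes_inverses(1)[OF perm])

lemma nxt_neq: "p < L \<Longrightarrow> nxt p \<noteq> p"
  using two_le_L by (cases "p + 1 < L") (auto simp: mod_if)

text \<open>Position p is overwritten at time inv \<sigma> p with the colour its right neighbour has then: the
  neighbour's final colour if the neighbour was overwritten earlier, its original colour otherwise.\<close>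
lemma foldl_copy_update_prefix:
  assumes "m \<le> L" "p < L"
  shows "foldl (copy_update L \<sigma>) c [0..<m] p =
    (if inv \<sigma> p < m then
       (if inv \<sigma> (nxt p) < inv \<sigma> p then foldl (copy_update L \<sigma>) c [0..<m] (nxt p) else c (nxt p))
     else c p)"
  using assms
proof (induction m arbitrary: p)
  case (Suc m)
  define d where "d = foldl (copy_update L \<sigma>) c [0..<m]"
  define q where "q = \<sigma> m"
  have q: "q < L" "inv \<sigma> q = m"
    using permutes_in_image[OF perm] Suc.prems by (auto simp: q_def inv_apply)
  have IH: "d x = (if inv \<sigma> x < m then (if inv \<sigma> (nxt x) < inv \<sigma> x then d (nxt x) else c (nxt x))
      else c x)" if "x < L" for x
    using Suc that unfolding d_def by simp
  have step: "foldl (copy_update L \<sigma>) c [0..<Suc m] = d(q := d (nxt q))"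
    by (simp add: d_def copy_update_def q_def)
  show ?case
  proof (cases "p = q")
    case True
    have "nxt q \<noteq> q" "inv \<sigma> (nxt q) \<noteq> m" using nxt_neq q inv_eq_iff by metis+
    then show ?thesis unfolding step using True q IH[of "nxt q"] by auto
  next
    case False
    then have "inv \<sigma> p \<noteq> m" using q inv_eq_iff by metis
    then show ?thesis unfolding step using False q Suc.prems IH[of p] by auto
  qed
qed simp

lemma sweep_source_step:
  assumes "p < L"
  shows "sweep_source L \<sigma> p = (if ascent L \<sigma> p then nxt p else sweep_source L \<sigma> (nxt p))"
proof -
  have "inv \<sigma> (nxt p) \<noteq> inv \<sigma> p" using nxt_neq[OF assms] inv_eq_iff by metis
  then show ?thesis
    using foldl_copy_update_prefix[of L p id] assms inv_less[OF assms]
    by (auto simp: ascent_def sweep_source_def copy_sweep_foldl)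
qed

lemma sweep_source_eq_if_no_ascent:
  "q < L \<Longrightarrow> p \<le> q \<Longrightarrow> \<forall>r. p \<le> r \<and> r < q \<longrightarrow> \<not> ascent L \<sigma> r \<Longrightarrow>
    sweep_source L \<sigma> p = sweep_source L \<sigma> q"
proof (induction "q - p" arbitrary: p)
  case (Suc n)
  then have "sweep_source L \<sigma> p = sweep_source L \<sigma> (p + 1)"
    using sweep_source_step[of p] by simp
  also have "\<dots> = sweep_source L \<sigma> q"
    using Suc by simp
  finally show ?case .
qed simp

lemma ascent_exists: "\<exists>d<L. ascent L \<sigma> d"
proof (rule ccontr)
  assume "\<not> (\<exists>d<L. ascent L \<sigma> d)"
  then have descent: "inv \<sigma> (nxt d) < inv \<sigma> d" if "d < L" for d
    using that nxt_neq inv_eq_iff by (metis ascent_def linorder_neqE_nat)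
  have "p < L \<Longrightarrow> inv \<sigma> p + p \<le> inv \<sigma> 0" for p
  proof (induction p)
    case (Suc p)
    then show ?case using descent[of p] by simp
  qed simp
  then have "inv \<sigma> (L - 1) + (L - 1) \<le> inv \<sigma> 0" using two_le_L by (metis diff_less zero_less_one order_less_le_trans one_le_numeral)
  moreover have "inv \<sigma> 0 < inv \<sigma> (L - 1)" using descent[of "L - 1"] two_le_L by simp
  ultimately show False using two_le_L by simp
qed

lemma sweep_source_first_ascent:
  "p \<le> d \<Longrightarrow> d < L \<Longrightarrow> ascent L \<sigma> d \<Longrightarrow> \<forall>r. p \<le> r \<and> r < d \<longrightarrow> \<not> ascent L \<sigma> r \<Longrightarrow>
    sweep_source L \<sigma> p = nxt d"
  using sweep_source_eq_if_no_ascent[of d p] sweep_source_step[of d] by simp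

lemma sweep_source_wrap:
  assumes "p < L" "\<forall>r. p \<le> r \<and> r < L \<longrightarrow> \<not> ascent L \<sigma> r"
  shows "sweep_source L \<sigma> p = sweep_source L \<sigma> 0"
proof -
  have "sweep_source L \<sigma> p = sweep_source L \<sigma> (L - 1)"
    by (rule sweep_source_eq_if_no_ascent) (use assms two_le_L in auto)
  also have "\<dots> = sweep_source L \<sigma> (nxt (L - 1))"
    using sweep_source_step[of "L - 1"] assms two_le_L by simp
  finally show ?thesis using two_le_L by simp
qed

lemma sweep_source_next_ascent:
  assumes "p < L"
  obtains d where "d < L" "ascent L \<sigma> d" "sweep_source L \<sigma> p = nxt d"
      "p \<le> d" "\<forall>r. p \<le> r \<and> r < d \<longrightarrow> \<not> ascent L \<sigma> r"
    | d where "d < L" "ascent L \<sigma> d" "sweep_source L \<sigma> p = nxt d"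
      "d < p" "\<forall>r. p \<le> r \<and> r < L \<longrightarrow> \<not> ascent L \<sigma> r" "\<forall>r<d. \<not> ascent L \<sigma> r"
proof -
  have least: "\<exists>d<L. q \<le> d \<and> ascent L \<sigma> d \<and> (\<forall>r. q \<le> r \<and> r < d \<longrightarrow> \<not> ascent L \<sigma> r)"
    if "d0 < L" "q \<le> d0" "ascent L \<sigma> d0" for q d0
  proof -
    have "\<exists>d. q \<le> d \<and> ascent L \<sigma> d" using that by blast
    then obtain d where d: "q \<le> d \<and> ascent L \<sigma> d" "\<forall>r<d. \<not> (q \<le> r \<and> ascent L \<sigma> r)"
      unfolding exists_least_iff[of "\<lambda>d. q \<le> d \<and> ascent L \<sigma> d"] by blast
    then have "d \<le> d0" using that by (meson not_le)
    then show ?thesis using d that by (intro exI[of _ d]) auto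
  qed
  show ?thesis
  proof (cases "\<exists>d. p \<le> d \<and> d < L \<and> ascent L \<sigma> d")
    case True
    then show ?thesis
      using least that(1) sweep_source_first_ascent by (metis (no_types, lifting) less_imp_le_nat)
  next
    case False
    obtain d0 where "d0 < L" "ascent L \<sigma> d0" using ascent_exists by blast
    then obtain d where d: "d < L" "ascent L \<sigma> d" "\<forall>r<d. \<not> ascent L \<sigma> r"
      using least[of d0 0] by auto
    moreover have "sweep_source L \<sigma> p = nxt d"
      using sweep_source_wrap[OF assms] sweep_source_first_ascent[of 0 d] d False by auto
    moreover have "d < p" using d False by (meson not_le)
    ultimately show ?thesis using that(2) False by blast
  qed
qed

definition sources_in :: "nat \<Rightarrow> nat set" where
  "sources_in X = {p. p < L \<and> 1 \<le> sweep_source L \<sigma> p \<and> sweep_source L \<sigma> p \<le> X}"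

lemma nxt_in_range_iff: "d < L \<Longrightarrow> X < L \<Longrightarrow> (1 \<le> nxt d \<and> nxt d \<le> X) \<longleftrightarrow> d < X"
  by (cases "d + 1 < L") (auto simp: mod_if)

lemma sources_in_cases:
  assumes X: "X < L"
  obtains "sources_in X = {}"
    | "sources_in X = {..<L}"
    | a b where "a < X" "X \<le> b" "b < L" "ascent L \<sigma> a" "ascent L \<sigma> b"
        "\<forall>d. ascent L \<sigma> d \<and> d < X \<longrightarrow> d \<le> a" "\<forall>d<L. ascent L \<sigma> d \<longrightarrow> d \<le> b"
        "sources_in X = {p. p < L \<and> (p \<le> a \<or> b < p)}"
proof -
  have in_range: "p \<in> sources_in X \<longleftrightarrow> d < X"
    if "p < L" "d < L" "sweep_source L \<sigma> p = nxt d" for p d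
    using that nxt_in_range_iff[OF that(2) X] by (simp add: sources_in_def)
  consider (below) "\<forall>d<X. \<not> ascent L \<sigma> d" | (above) "\<forall>d. X \<le> d \<and> d < L \<longrightarrow> \<not> ascent L \<sigma> d"
    | (both) "\<exists>d<X. ascent L \<sigma> d" "\<exists>d. X \<le> d \<and> d < L \<and> ascent L \<sigma> d" by blast
  then show ?thesis
  proof cases
    case below
    have "p \<notin> sources_in X" if "p < L" for p
      by (rule sweep_source_next_ascent[OF that]) (use below in_range that in \<open>meson not_le\<close>)+
    then show ?thesis using that(1) by (auto simp: sources_in_def)
  next
    case above
    have "p \<in> sources_in X" if "p < L" for p
      by (rule sweep_source_next_ascent[OF that]) (use above in_range that in \<open>meson not_le\<close>)+
    then show ?thesis using that(2) by (auto simp: sources_in_def)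
  next
    case both
    define a where "a = Max {d. d < X \<and> ascent L \<sigma> d}"
    define b where "b = Max {d. d < L \<and> ascent L \<sigma> d}"
    have a: "a < X" "ascent L \<sigma> a" "\<forall>d. ascent L \<sigma> d \<and> d < X \<longrightarrow> d \<le> a"
      using Max_in[of "{d. d < X \<and> ascent L \<sigma> d}"] both(1) by (auto simp: a_def)
    have "b \<in> {d. d < L \<and> ascent L \<sigma> d}"
      unfolding b_def by (intro Max_in) (use both(2) in auto)
    then have b: "b < L" "ascent L \<sigma> b" "\<forall>d<L. ascent L \<sigma> d \<longrightarrow> d \<le> b"
      by (auto simp: b_def)
    have "X \<le> b" using both(2) b(3) by force
    have "p \<in> sources_in X \<longleftrightarrow> p \<le> a \<or> b < p" if "p < L" for p
      by (rule sweep_source_next_ascent[OF that])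
        (use a b \<open>X \<le> b\<close> in_range that in \<open>meson le_less_trans not_le\<close>)+
    then have "sources_in X = {p. p < L \<and> (p \<le> a \<or> b < p)}"
      by (auto simp: sources_in_def)
    with a b \<open>X \<le> b\<close> show ?thesis using that(3) by blast
  qed
qed

lemma cyc_interval_sources_in:
  assumes "X < L"
  shows "cyc_interval L (sources_in X)"
  using assms
proof (cases rule: sources_in_cases)
  case (3 a b)
  then have "sources_in X = (\<lambda>i. (Suc b + i) mod L) ` {..<L - b + a}" "L - b + a \<le> L"
    using wrapped_interval_eq[of a b L] by simp_all
  then show ?thesis unfolding cyc_interval_def by blast
qed (simp_all add: cyc_interval_empty cyc_interval_full)

lemma card_sources_in_neq:
  assumes X: "1 \<le> X" "X < L" and event: "resize_event L X \<sigma>"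
  shows "card (sources_in X) \<noteq> X"
  using X(2)
proof (cases rule: sources_in_cases)
  case (3 a b)
  have "sources_in X = (\<lambda>i. (Suc b + i) mod L) ` {..<L - b + a}" "L - b + a \<le> L"
    using 3 wrapped_interval_eq[of a b L] by simp_all
  then have "card (sources_in X) = L - b + a"
    using card_cyc_interval by presburger
  moreover have "X \<noteq> 1" using event 3 by (auto simp: resize_event_def)
  moreover have "X \<noteq> L - 1"
  proof
    assume "X = L - 1"
    then have "b = L - 1" using 3 by simp
    then show False using event 3 \<open>X \<noteq> 1\<close> \<open>X = L - 1\<close> by (simp add: resize_event_def)
  qed
  moreover from calculation have "a = X - 1" "b \<noteq> L - 1"
    using event 3 X by (auto simp: resize_event_def)
  ultimately show ?thesis using 3 X by simp
qed (use X in simp_all)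

lemma colour_set_copy_sweep:
  assumes "\<forall>q<L. c q = k \<longleftrightarrow> 1 \<le> q \<and> q \<le> X"
  shows "colour_set L k (copy_sweep L \<sigma> c) = sources_in X"
  using assms sweep_source_less by (auto simp: colour_set_def sources_in_def copy_sweep_eq_source)

end

lemma inv_perm_neq:
  assumes "\<sigma> \<in> perms L" "a \<noteq> b"
  shows "inv \<sigma> a \<noteq> inv \<sigma> b"
proof
  assume "inv \<sigma> a = inv \<sigma> b"
  then have "\<sigma> (inv \<sigma> a) = \<sigma> (inv \<sigma> b)" by simp
  then show False using permutes_inverses(1)[of \<sigma> "{..<L}"] assms by (simp add: perms_def)
qed

text \<open>Composing with the transposition of a and b exchanges the update times of a and b.\<close>
lemma card_perms_inv_less_half:
  assumes ab: "a \<noteq> b" "a < L" "b < L"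
    and Q: "\<And>\<sigma>. \<sigma> \<in> perms L \<Longrightarrow> Q (Transposition.transpose a b \<circ> \<sigma>) = Q \<sigma>"
  shows "card {\<sigma>\<in>perms L. Q \<sigma> \<and> inv \<sigma> a < inv \<sigma> b} * 2 = card {\<sigma>\<in>perms L. Q \<sigma>}"
proof -
  define A where "A = {\<sigma>\<in>perms L. Q \<sigma> \<and> inv \<sigma> a < inv \<sigma> b}"
  define B where "B = {\<sigma>\<in>perms L. Q \<sigma> \<and> inv \<sigma> b < inv \<sigma> a}"
  have swap: "Transposition.transpose a b \<circ> \<sigma> \<in> perms L" "inv (Transposition.transpose a b \<circ> \<sigma>) = inv \<sigma> \<circ> Transposition.transpose a b"
    if "\<sigma> \<in> perms L" for \<sigma>
    using that ab by (simp_all add: perms_def permutes_compose permutes_swap_id o_inv_distrib permutes_bij)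
  have "bij_betw (\<lambda>\<sigma>. Transposition.transpose a b \<circ> \<sigma>) A B"
    by (rule bij_betw_byWitness[where f' = "\<lambda>\<sigma>. Transposition.transpose a b \<circ> \<sigma>"])
      (auto simp: A_def B_def swap Q fun_eq_iff)
  then have "card A = card B" by (rule bij_betw_same_card)
  moreover have "{\<sigma>\<in>perms L. Q \<sigma>} = A \<union> B" "A \<inter> B = {}"
    using inv_perm_neq[OF _ ab(1)] by (auto simp: A_def B_def linorder_neq_iff)
  moreover have "finite A" "finite B" by (simp_all add: A_def B_def finite_perms)
  ultimately show ?thesis by (simp add: A_def card_Un_disjoint)
qed

lemma card_perms_inv_less:
  "a \<noteq> b \<Longrightarrow> a < L \<Longrightarrow> b < L \<Longrightarrow> card {\<sigma>\<in>perms L. inv \<sigma> a < inv \<sigma> b} * 2 = fact L"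
  using card_perms_inv_less_half[of a b L "\<lambda>_. True"] by (simp add: card_perms)

lemma card_perms_inv_less_two:
  assumes "a \<noteq> b" "a < L" "b < L" "c \<noteq> d" "c < L" "d < L" "c \<notin> {a, b}" "d \<notin> {a, b}"
  shows "card {\<sigma>\<in>perms L. inv \<sigma> c < inv \<sigma> d \<and> inv \<sigma> a < inv \<sigma> b} * 4 = fact L"
proof -
  have "inv (Transposition.transpose a b \<circ> \<sigma>) = inv \<sigma> \<circ> Transposition.transpose a b" if "\<sigma> \<in> perms L" for \<sigma>
    using that by (simp add: o_inv_distrib perms_def permutes_bij)
  then have "card {\<sigma>\<in>perms L. inv \<sigma> c < inv \<sigma> d \<and> inv \<sigma> a < inv \<sigma> b} * 2
      = card {\<sigma>\<in>perms L. inv \<sigma> c < inv \<sigma> d}"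
    using assms(7,8) by (intro card_perms_inv_less_half[OF assms(1-3)]) auto
  then show ?thesis using card_perms_inv_less[OF assms(4-6)] by linarith
qed

lemma card_resize_event:
  assumes L: "2 \<le> L" and X: "1 \<le> X" "X < L"
  shows "fact L \<le> 4 * card {\<sigma>\<in>perms L. resize_event L X \<sigma>}"
proof -
  have event: "resize_event L X \<sigma> \<longleftrightarrow>
      (if X = 1 then \<not> inv \<sigma> 0 < inv \<sigma> 1
       else if X = L - 1 then \<not> inv \<sigma> (L - 1) < inv \<sigma> 0
       else \<not> inv \<sigma> (L - 1) < inv \<sigma> 0 \<and> inv \<sigma> (X - 1) < inv \<sigma> X)" for \<sigma>
    using L X by (simp add: resize_event_def ascent_def)
  have flip: "\<not> inv \<sigma> a < inv \<sigma> b \<longleftrightarrow> inv \<sigma> b < inv \<sigma> a" if "\<sigma> \<in> perms L" "a \<noteq> b" for \<sigma> a b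
    using inv_perm_neq[OF that] by linarith
  consider "X = 1" | "X \<noteq> 1" "X = L - 1" | "X \<noteq> 1" "X \<noteq> L - 1" by blast
  then show ?thesis
  proof cases
    case 1
    have "{\<sigma>\<in>perms L. resize_event L X \<sigma>} = {\<sigma>\<in>perms L. inv \<sigma> 1 < inv \<sigma> 0}"
      unfolding event using 1 flip[of _ 0 1] by auto
    then show ?thesis using card_perms_inv_less[of 1 0 L] L by simp
  next
    case 2
    have "{\<sigma>\<in>perms L. resize_event L X \<sigma>} = {\<sigma>\<in>perms L. inv \<sigma> 0 < inv \<sigma> (L - 1)}"
      unfolding event using 2 L flip[of _ "L - 1" 0] by auto
    then show ?thesis using card_perms_inv_less[of 0 "L - 1" L] L by simp
  next
    case 3
    have "{\<sigma>\<in>perms L. resize_event L X \<sigma>}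
        = {\<sigma>\<in>perms L. inv \<sigma> 0 < inv \<sigma> (L - 1) \<and> inv \<sigma> (X - 1) < inv \<sigma> X}"
      unfolding event using 3 L flip[of _ "L - 1" 0] by auto
    moreover have "card {\<sigma>\<in>perms L. inv \<sigma> 0 < inv \<sigma> (L - 1) \<and> inv \<sigma> (X - 1) < inv \<sigma> X} * 4
        = fact L"
      by (rule card_perms_inv_less_two) (use L X 3 in auto)
    ultimately show ?thesis by simp
  qed
qed


section \<open>Colour classes stay cyclic intervals\<close>

lemma same_run_Suc_mod:
  assumes "1 < L" "p < L" "G ((p + 1) mod L) = G p"
  shows "same_run L G p ((p + 1) mod L)"
proof -
  have "G ((p + j) mod L) = G p" if "j \<le> 1" for j
    using assms that by (cases j) auto
  then show ?thesis unfolding same_run_def using assms(1) by blast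
qed

lemma same_run_eq_if_boundaries:
  assumes "same_run L G p q" "p < L" "q < L"
    and "G ((p + 1) mod L) \<noteq> G p" "G ((q + 1) mod L) \<noteq> G q"
  shows "p = q"
proof -
  have no_step: "j = 0" if "\<forall>i\<le>j. G ((r + i) mod L) = G r" "G ((r + 1) mod L) \<noteq> G r" for r j
    using that(1)[rule_format, of 1] that(2) by (cases j) auto
  from assms(1) show ?thesis
    unfolding same_run_def
  proof (elim disjE exE conjE)
    fix j assume j: "(p + j) mod L = q" "\<forall>i\<le>j. G ((p + i) mod L) = G p"
    then show "p = q" using no_step[OF j(2) assms(4)] assms(2) by simp
  next
    fix j assume j: "(q + j) mod L = p" "\<forall>i\<le>j. G ((q + i) mod L) = G q"
    then show "p = q" using no_step[OF j(2) assms(5)] assms(3) by simp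
  qed
qed

lemma cyc_interval_run_colouring:
  assumes "run_colouring L G c0"
  shows "cyc_interval L (colour_set L k c0)"
proof (rule cyc_interval_if_unique_exit[OF colour_set_subset])
  have boundary: "G ((x + 1) mod L) \<noteq> G x"
    if "x \<in> colour_set L k c0" "(x + 1) mod L \<notin> colour_set L k c0" for x
  proof
    assume eq: "G ((x + 1) mod L) = G x"
    have x: "x < L" "c0 x = k" "c0 ((x + 1) mod L) \<noteq> k"
      using that by (auto simp: colour_set_def)
    then have "1 < L" by (cases "L = 1") auto
    then have "c0 x = c0 ((x + 1) mod L)"
      using assms[unfolded run_colouring_def, rule_format, of x "(x + 1) mod L"] x(1)
        same_run_Suc_mod[OF _ _ eq] by simp
    then show False using x by simp
  qed
  fix p q
  assume p: "p \<in> colour_set L k c0" "(p + 1) mod L \<notin> colour_set L k c0"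
    and q: "q \<in> colour_set L k c0" "(q + 1) mod L \<notin> colour_set L k c0"
  then have pq: "p < L" "q < L" "c0 p = c0 q" by (auto simp: colour_set_def)
  then have "same_run L G p q" using assms by (simp add: run_colouring_def)
  then show "p = q" using same_run_eq_if_boundaries pq boundary p q by blast
qed

lemma colour_set_rotate_to_front:
  assumes "cyc_interval L (colour_set L k c)" "colour_len L k c \<notin> {0, L}"
  obtains m where "m < L" "\<forall>q<L. (c \<circ> rot L m) q = k \<longleftrightarrow> 1 \<le> q \<and> q \<le> colour_len L k c"
proof -
  obtain s n where sn: "n \<le> L" "colour_set L k c = (\<lambda>i. (s + i) mod L) ` {..<n}"
    using assms(1) unfolding cyc_interval_def by blast
  have n: "colour_len L k c = n" "1 \<le> n" "n < L"
    using assms(2) sn card_cyc_interval[OF sn(1)] by (auto simp: colour_len_eq_card)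
  define m where "m = (s + L - 1) mod L"
  have shift: "rot L m (i + 1) = (s + i) mod L" for i
  proof -
    have "rot L m (i + 1) = (i + 1 + (s + L - 1)) mod L"
      unfolding rot_def m_def by (rule mod_add_right_eq)
    also have "i + 1 + (s + L - 1) = (s + i) + L" using n by simp
    finally show ?thesis by simp
  qed
  have "(c \<circ> rot L m) q = k \<longleftrightarrow> 1 \<le> q \<and> q \<le> n" if "q < L" for q
  proof -
    have "(c \<circ> rot L m) q = k \<longleftrightarrow> rot L m q \<in> colour_set L k c"
      using rot_less[of L m q] n by (simp add: colour_set_def)
    also have "\<dots> \<longleftrightarrow> (\<exists>i<n. rot L m q = rot L m (i + 1))"
      unfolding sn(2) image_iff shift by auto
    also have "\<dots> \<longleftrightarrow> (\<exists>i<n. q = i + 1)"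
      using inj_on_rot[of L m] that n by (auto simp: inj_on_def)
    also have "\<dots> \<longleftrightarrow> 1 \<le> q \<and> q \<le> n"
      by (auto intro: exI[of _ "q - 1"])
    finally show ?thesis .
  qed
  moreover have "m < L" using n by (simp add: m_def)
  ultimately show ?thesis using that n by auto
qed

lemma colour_set_copy_sweep_rot:
  assumes "\<sigma> \<in> perms L" "m < L"
  shows "colour_set L k (copy_sweep L \<sigma> c)
    = rot L m ` colour_set L k (copy_sweep L (rot_inv L m \<circ> \<sigma>) (c \<circ> rot L m))"
proof (intro set_eqI iffI)
  have \<sigma>: "\<sigma> permutes {..<L}" using assms(1) by (simp add: perms_def)
  fix q assume "q \<in> colour_set L k (copy_sweep L \<sigma> c)"
  then have q: "q < L" "copy_sweep L \<sigma> c q = k" by (auto simp: colour_set_def)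
  then have "rot_inv L m q \<in> colour_set L k (copy_sweep L (rot_inv L m \<circ> \<sigma>) (c \<circ> rot L m))"
    using copy_sweep_rot[OF \<sigma> assms(2), of "rot_inv L m q" c] assms(2)
    by (simp add: colour_set_def rot_inv_less rot_rot_inv)
  moreover have "q = rot L m (rot_inv L m q)" using q assms(2) by (simp add: rot_rot_inv)
  ultimately show "q \<in> rot L m ` colour_set L k (copy_sweep L (rot_inv L m \<circ> \<sigma>) (c \<circ> rot L m))"
    by blast
next
  fix q assume "q \<in> rot L m ` colour_set L k (copy_sweep L (rot_inv L m \<circ> \<sigma>) (c \<circ> rot L m))"
  then show "q \<in> colour_set L k (copy_sweep L \<sigma> c)"
    using copy_sweep_rot[of \<sigma> L m] assms rot_less[of L m]
    by (auto simp: colour_set_def perms_def)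
qed

lemma colour_set_copy_sweep_const:
  assumes "\<forall>q<L. c q = k \<longleftrightarrow> b"
  shows "colour_set L k (copy_sweep L \<sigma> c) = (if b then {..<L} else {})"
  using assms sweep_source_less by (auto simp: colour_set_def copy_sweep_eq_source)

lemma cyc_interval_colour_set_copy_sweep:
  assumes "cyc_interval L (colour_set L k c)" "\<sigma> \<in> perms L"
  shows "cyc_interval L (colour_set L k (copy_sweep L \<sigma> c))"
proof (cases "colour_len L k c \<in> {0, L}")
  case True
  then have "colour_set L k c = {} \<or> colour_set L k c = {..<L}"
    using card_subset_eq[OF finite_lessThan colour_set_subset]
    by (auto simp: colour_len_eq_card finite_subset[OF colour_set_subset])
  then have "\<forall>q<L. c q = k \<longleftrightarrow> colour_set L k c = {..<L}"
    by (auto simp: colour_set_def set_eq_iff)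
  from colour_set_copy_sweep_const[OF this] show ?thesis
    by (simp add: cyc_interval_empty cyc_interval_full)
next
  case False
  obtain m where m: "m < L" "\<forall>q<L. (c \<circ> rot L m) q = k \<longleftrightarrow> 1 \<le> q \<and> q \<le> colour_len L k c"
    using colour_set_rotate_to_front[OF assms(1) False] by blast
  have "1 \<le> colour_len L k c" "colour_len L k c < L"
    using False colour_len_le[of L k c] by auto
  then interpret sweep L "rot_inv L m \<circ> \<sigma>"
    using rot_inv_comp_perms[OF assms(2)] m(1) by unfold_locales (simp_all add: perms_def)
  have "colour_set L k (copy_sweep L (rot_inv L m \<circ> \<sigma>) (c \<circ> rot L m)) = sources_in (colour_len L k c)"
    by (rule colour_set_copy_sweep[OF m(2)])
  then show ?thesis
    unfolding colour_set_copy_sweep_rot[OF assms(2) m(1)]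
    by (simp add: cyc_interval_rot_image cyc_interval_sources_in \<open>colour_len L k c < L\<close>)
qed

lemma card_colour_len_changes:
  assumes "cyc_interval L (colour_set L k c)" "colour_len L k c \<notin> {0, L}"
  shows "fact L \<le> 4 * card {\<sigma>\<in>perms L. colour_len L k (copy_sweep L \<sigma> c) \<noteq> colour_len L k c}"
proof -
  let ?X = "colour_len L k c"
  obtain m where m: "m < L" "\<forall>q<L. (c \<circ> rot L m) q = k \<longleftrightarrow> 1 \<le> q \<and> q \<le> ?X"
    using colour_set_rotate_to_front[OF assms] by blast
  have X: "1 \<le> ?X" "?X < L" "2 \<le> L" using assms(2) colour_len_le[of L k c] by auto
  have "card {\<sigma>\<in>perms L. resize_event L ?X (rot_inv L m \<circ> \<sigma>)} = card {\<sigma>\<in>perms L. resize_event L ?X \<sigma>}"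
    using sum_perms_comp[OF rot_inv_permutes, of m L "\<lambda>\<tau>. of_bool (resize_event L ?X \<tau>) :: nat"] m(1)
    by (simp add: finite_perms Int_def)
  moreover have "{\<sigma>\<in>perms L. resize_event L ?X (rot_inv L m \<circ> \<sigma>)}
      \<subseteq> {\<sigma>\<in>perms L. colour_len L k (copy_sweep L \<sigma> c) \<noteq> ?X}"
  proof safe
    fix \<sigma> assume \<sigma>: "\<sigma> \<in> perms L" and event: "resize_event L ?X (rot_inv L m \<circ> \<sigma>)"
    interpret sweep L "rot_inv L m \<circ> \<sigma>"
      using rot_inv_comp_perms[OF \<sigma>] m(1) X by unfold_locales (simp_all add: perms_def)
    have "colour_len L k (copy_sweep L \<sigma> c)
        = card (colour_set L k (copy_sweep L (rot_inv L m \<circ> \<sigma>) (c \<circ> rot L m)))"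
      unfolding colour_len_eq_card colour_set_copy_sweep_rot[OF \<sigma> m(1)]
      by (rule card_rot_image[OF colour_set_subset])
    also have "\<dots> = card (sources_in ?X)"
      by (simp add: colour_set_copy_sweep[OF m(2)])
    finally show "colour_len L k (copy_sweep L \<sigma> c) = ?X \<Longrightarrow> False"
      using card_sources_in_neq[OF X(1,2) event] by simp
  qed
  then have "card {\<sigma>\<in>perms L. resize_event L ?X (rot_inv L m \<circ> \<sigma>)}
      \<le> card {\<sigma>\<in>perms L. colour_len L k (copy_sweep L \<sigma> c) \<noteq> ?X}"
    by (rule card_mono[rotated]) (simp add: finite_perms)
  ultimately show ?thesis using card_resize_event[OF X(3,1,2)] by linarith
qed


section \<open>The potential and the tail bound\<close>

definition potential :: "nat \<Rightarrow> nat \<Rightarrow> real" where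
  "potential L x = real x * (real L - real x)"

lemma potential_nonneg: "x \<le> L \<Longrightarrow> 0 \<le> potential L x"
  by (simp add: potential_def)

lemma potential_le: "4 * potential L x \<le> real L ^ 2"
proof -
  have "0 \<le> (real L - 2 * real x) ^ 2" by simp
  then show ?thesis by (simp add: potential_def power2_eq_square algebra_simps)
qed

lemma potential_expand:
  "potential L y = potential L x + (real L - 2 * real x) * (real y - real x) - (real y - real x) ^ 2"
  by (simp add: potential_def power2_eq_square algebra_simps)

lemma sum_potential_copy_sweep_le:
  assumes "cyc_interval L (colour_set L k c)" "colour_len L k c \<notin> {0, L}"
  shows "(\<Sum>\<sigma>\<in>perms L. potential L (colour_len L k (copy_sweep L \<sigma> c)))
    \<le> fact L * (potential L (colour_len L k c) - 1/4)"
proof -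
  define X where "X = colour_len L k c"
  define Y where "Y \<sigma> = colour_len L k (copy_sweep L \<sigma> c)" for \<sigma>
  define A where "A = {\<sigma>\<in>perms L. Y \<sigma> \<noteq> X}"
  have "(\<Sum>\<sigma>\<in>perms L. real (Y \<sigma>)) = fact L * real X"
    using arg_cong[OF sum_colour_len_copy_sweep, of real L k c]
    by (simp add: X_def Y_def of_nat_sum)
  then have centred: "(\<Sum>\<sigma>\<in>perms L. real (Y \<sigma>) - real X) = 0"
    by (simp add: sum_subtractf card_perms)
  have "fact L \<le> 4 * card A"
    using card_colour_len_changes[OF assms] by (simp add: A_def X_def Y_def)
  then have "real (fact L) \<le> real (4 * card A)"
    by (simp only: of_nat_le_iff)
  then have "fact L \<le> 4 * real (card A)"
    by simp
  also have "real (card A) = (\<Sum>\<sigma>\<in>A. 1)" by simp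
  also have "\<dots> \<le> (\<Sum>\<sigma>\<in>A. (real (Y \<sigma>) - real X) ^ 2)"
  proof (rule sum_mono)
    fix \<sigma> assume "\<sigma> \<in> A"
    then have "\<bar>1\<bar> \<le> \<bar>real (Y \<sigma>) - real X\<bar>" by (simp add: A_def) linarith
    then show "1 \<le> (real (Y \<sigma>) - real X) ^ 2"
      using one_le_power[of "\<bar>real (Y \<sigma>) - real X\<bar>" 2] by simp
  qed
  also have "\<dots> \<le> (\<Sum>\<sigma>\<in>perms L. (real (Y \<sigma>) - real X) ^ 2)"
    by (rule sum_mono2) (auto simp: A_def finite_perms)
  finally have spread: "fact L / 4 \<le> (\<Sum>\<sigma>\<in>perms L. (real (Y \<sigma>) - real X) ^ 2)"
    by simp
  have "(\<Sum>\<sigma>\<in>perms L. potential L (Y \<sigma>))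
      = fact L * potential L X + (real L - 2 * real X) * (\<Sum>\<sigma>\<in>perms L. real (Y \<sigma>) - real X)
        - (\<Sum>\<sigma>\<in>perms L. (real (Y \<sigma>) - real X) ^ 2)"
    by (subst potential_expand[where x = X])
      (simp only: sum.distrib sum_subtractf sum_distrib_left[symmetric] sum_constant card_perms of_nat_fact)
  also have "\<dots> \<le> fact L * (potential L X - 1/4)"
    using centred spread by (simp add: algebra_simps)
  finally show ?thesis by (simp add: X_def Y_def)
qed

lemma sum_survival_prob_le:
  "cyc_interval L (colour_set L k c) \<Longrightarrow>
    (\<Sum>i<n. survival_prob L k (Suc i) c) \<le> 4 * potential L (colour_len L k c)"
proof (induction n arbitrary: c)
  case 0
  then show ?case using potential_nonneg[OF colour_len_le] by simp
next
  case (Suc n)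
  show ?case
  proof (cases "colour_len L k c \<in> {0, L}")
    case True
    then show ?thesis using potential_nonneg[OF colour_len_le] by (simp add: survival_prob_Suc)
  next
    case False
    let ?c = "\<lambda>\<sigma>. copy_sweep L \<sigma> c"
    have "(\<Sum>i<Suc n. survival_prob L k (Suc i) c)
        = 1 + (\<Sum>i<n. (\<Sum>\<sigma>\<in>perms L. survival_prob L k (Suc i) (?c \<sigma>)) / fact L)"
      using False by (simp add: sum.lessThan_Suc_shift survival_prob_Suc card_perms del: sum.lessThan_Suc)
    also have "\<dots> = 1 + (\<Sum>\<sigma>\<in>perms L. (\<Sum>i<n. survival_prob L k (Suc i) (?c \<sigma>))) / fact L"
      by (simp add: sum_divide_distrib[symmetric] sum.swap[of _ "{..<n}"])
    also have "\<dots> \<le> 1 + (\<Sum>\<sigma>\<in>perms L. 4 * potential L (colour_len L k (?c \<sigma>))) / fact L"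
      by (intro add_left_mono divide_right_mono sum_mono Suc.IH
          cyc_interval_colour_set_copy_sweep[OF Suc.prems]) auto
    also have "\<dots> \<le> 4 * potential L (colour_len L k c)"
      using sum_potential_copy_sweep_le[OF Suc.prems False]
      by (simp add: sum_distrib_left[symmetric] field_simps)
    finally show ?thesis .
  qed
qed

text \<open>Markov's inequality for the absorption time T: n P(T \<ge> n) \<le> \<Sum>i<n. P(T \<ge> i + 1) \<le> E T.\<close>
lemma survival_prob_le_div:
  assumes "cyc_interval L (colour_set L k c)" "0 < n"
  shows "survival_prob L k n c \<le> real L ^ 2 / n"
proof -
  have "real n * survival_prob L k n c \<le> (\<Sum>i<n. survival_prob L k (Suc i) c)"
    using sum_mono[of "{..<n}" "\<lambda>_. survival_prob L k n c" "\<lambda>i. survival_prob L k (Suc i) c"]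
      survival_prob_antimono by simp
  also have "\<dots> \<le> real L ^ 2"
    using sum_survival_prob_le[OF assms(1), of n] potential_le[of L "colour_len L k c"] by linarith
  finally show ?thesis using assms(2) by (simp add: field_simps)
qed

lemma survival_prob_add_le:
  assumes bound: "\<And>c. cyc_interval L (colour_set L k c) \<Longrightarrow> survival_prob L k n c \<le> B"
    and "0 \<le> B"
  shows "cyc_interval L (colour_set L k c) \<Longrightarrow> survival_prob L k (m + n) c \<le> B * survival_prob L k m c"
proof (induction m arbitrary: c)
  case 0
  then show ?case using bound by simp
next
  case (Suc m)
  have "(\<Sum>\<sigma>\<in>perms L. survival_prob L k (m + n) (copy_sweep L \<sigma> c))
      \<le> (\<Sum>\<sigma>\<in>perms L. B * survival_prob L k m (copy_sweep L \<sigma> c))"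
    by (intro sum_mono Suc.IH cyc_interval_colour_set_copy_sweep[OF Suc.prems])
  then show ?case
    by (simp add: survival_prob_Suc sum_distrib_left[symmetric] divide_right_mono)
qed

lemma survival_prob_le_power:
  assumes "cyc_interval L (colour_set L k c)" "1 \<le> L"
  shows "survival_prob L k (a * (4 * L^2)) c \<le> (1/2) ^ a"
proof (induction a)
  case (Suc a)
  have half: "survival_prob L k (4 * L^2) d \<le> 1/2" if "cyc_interval L (colour_set L k d)" for d
    using survival_prob_le_div[OF that, of "4 * L^2"] assms(2) by simp
  have "survival_prob L k (a * (4 * L^2) + 4 * L^2) c \<le> 1/2 * survival_prob L k (a * (4 * L^2)) c"
    by (rule survival_prob_add_le[OF half _ assms(1)]) auto
  also have "\<dots> \<le> (1/2) ^ Suc a" using Suc by simp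
  finally show ?case by (simp add: add.commute)
qed simp

theorem lemma4:
  fixes L a k :: nat and G :: "nat \<Rightarrow> bool" and c0 :: "nat \<Rightarrow> nat"
  assumes "L \<ge> 1"
    and "run_colouring L G c0"
    and "\<exists>p<L. c0 p = k"
    and "a \<ge> 1"
  shows "measure_pmf.prob (copy_traj L c0 (4 * a * L^2))
           {xs. \<forall>i<4 * a * L^2. colour_len L k (xs ! i) \<notin> {0, L}}
         \<le> (1/2) ^ a"
proof -
  have horizon: "4 * a * L^2 = a * (4 * L^2)" by simp
  show ?thesis
    using survival_prob_le_power[OF cyc_interval_run_colouring[OF assms(2)] assms(1), where a = a]
    unfolding survival_prob_def horizon .
qed

end
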